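(* Let $\rho=|\psi\rangle\langle\psi|$ be an $n$-qubit pure state, $S\subseteq[n]$ non-empty with $s=|S|$, and let $K\ge 2$, $L\ge 1$ be integers. Let $U_1,\dots,U_L$ be independent random local unitaries, each of the form $U_l=\bigotimes_{i\in S}U_{l,i}$ with independent Haar-random $U_{l,i}\in U(2)$ (identity outside $S$). Conditioned on $U_l$, let $\mathbf{Z}_{l,1},\dots,\mathbf{Z}_{l,K}\in\{0,1\}^s$ be independent outcomes, each distributed according to $P_{U_l}(\mathbf{z})=\operatorname{tr}\big(U_l\rho U_l^\dagger(|\mathbf{z}\rangle\langle\mathbf{z}|\otimes\mathbb{I}_{[n]\setminus S})\big)$ (computational-basis measurement of the qubits in $S$ after applying $U_l$). Define $$\hat S_l^{(K)}=\frac{1}{K(K-1)}\sum_{\substack{k,k'=1\\k\neq k'}}^K \mathbb{1}[\mathbf{Z}_{l,k}=\mathbf{Z}_{l,k'}],\qquad \hat{\mathcal{C}}_{|\psi\rangle}(S)=1-\Big(\tfrac32\Big)^s\frac1L\sum_{l=1}^L\hat S_l^{(K)}.$$ Then $\hat{\mathcal{C}}_{|\psi\rangle}(S)$ is an unbiased estimator of $\mathcal{C}_{|\psi\rangle}(S)$. Moreover, given a precision $\epsilon>0$ and confidence level $1-\delta\in(0,1)$, using at most $L=O\big((9/4)^s\log(1/\delta)/\epsilon^2\big)$ random unitaries (with an absolute implied constant) guarantees $\Pr\big[|\hat{\mathcal{C}}_{|\psi\rangle}(S)-\mathcal{C}_{|\psi\rangle}(S)|\ge\epsilon\big]\le\d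elta$.
   Context: $[n]=\{1,\dots,n\}$ labels the qubits. For an $n$-qubit pure state $|\psi\rangle$ and a non-empty $S\subseteq[n]$ with $s=|S|$, the concentratable entanglement is $\mathcal{C}_{|\psi\rangle}(S)=1-\frac{1}{2^s}\sum_{\alpha\subseteq S}\operatorname{tr}(\rho_\alpha^2)$, where $\rho_\alpha$ is the reduced state of $|\psi\rangle\langle\psi|$ on the qubits in $\alpha$, and $\operatorname{tr}(\rho_\emptyset^2):=1$. $\mathbb{1}[A]$ is $1$ if $A$ holds and $0$ otherwise. *)

theory Defs
  imports "HOL-Probability.Probability"
begin

text \<open>Qubits are labelled by natural numbers; [n] = {1..n}.
  A computational-basis string on a set A of qubits is an extensional
  function A -> bool.\<close>

type_synonym bits = "nat \<Rightarrow> bool"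
type_synonym qstate = "bits \<Rightarrow> complex"
type_synonym mat2 = "complex^2^2"

definition bitstrings :: "nat set \<Rightarrow> bits set" where
  "bitstrings A = PiE A (\<lambda>_. UNIV)"

definition pure_state :: "nat \<Rightarrow> qstate \<Rightarrow> bool" where
  "pure_state n \<psi> \<longleftrightarrow> (\<Sum>x\<in>bitstrings {1..n}. (cmod (\<psi> x))^2) = 1"

definition merge :: "nat set \<Rightarrow> bits \<Rightarrow> bits \<Rightarrow> bits" where
  "merge A x z = (\<lambda>i. if i \<in> A then x i else z i)"

text \<open>Matrix entries of the reduced state rho_alpha of |psi><psi| (partial trace over [n] - alpha).\<close>
definition reduced :: "nat \<Rightarrow> qstate \<Rightarrow> nat set \<Rightarrow> bits \<Rightarrow> bits \<Rightarrow> complex" where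
  "reduced n \<psi> \<alpha> x y =
     (\<Sum>z\<in>bitstrings ({1..n} - \<alpha>). \<psi> (merge \<alpha> x z) * cnj (\<psi> (merge \<alpha> y z)))"

text \<open>Purity tr(rho_alpha^2), with tr(rho_empty^2) := 1.\<close>
definition purity :: "nat \<Rightarrow> qstate \<Rightarrow> nat set \<Rightarrow> real" where
  "purity n \<psi> \<alpha> = (if \<alpha> = {} then 1 else
     Re (\<Sum>x\<in>bitstrings \<alpha>. \<Sum>y\<in>bitstrings \<alpha>. reduced n \<psi> \<alpha> x y * reduced n \<psi> \<alpha> y x))"

definition conc_ent :: "nat \<Rightarrow> qstate \<Rightarrow> nat set \<Rightarrow> real" where
  "conc_ent n \<psi> S = 1 - (1 / 2 ^ card S) * (\<Sum>\<alpha>\<in>Pow S. purity n \<psi> \<alpha>)"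

definition adjoint2 :: "mat2 \<Rightarrow> mat2" where
  "adjoint2 U = (\<chi> i j. cnj (U $ j $ i))"

definition U2 :: "mat2 set" where
  "U2 = {U. U ** adjoint2 U = mat 1 \<and> adjoint2 U ** U = mat 1}"

definition haar_U2 :: "mat2 measure \<Rightarrow> bool" where
  "haar_U2 \<mu> \<longleftrightarrow> prob_space \<mu> \<and> sets \<mu> = sets borel \<and> emeasure \<mu> U2 = 1 \<and>
     (\<forall>V\<in>U2. distr \<mu> borel (\<lambda>U. V ** U) = \<mu>)"

definition bidx :: "bool \<Rightarrow> 2" where
  "bidx b = (if b then 1 else 0)"

text \<open>(U psi)(x) for the local unitary U = tensor_{i in S} U_i (identity outside S).\<close>
definition apply_local :: "nat \<Rightarrow> nat set \<Rightarrow> (nat \<Rightarrow> mat2) \<Rightarrow> qstate \<Rightarrow> qstate" where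
  "apply_local n S U \<psi> x =
     (\<Sum>y\<in>bitstrings {1..n}.
        (\<Prod>i\<in>S. U i $ bidx (x i) $ bidx (y i)) *
        (if (\<forall>i\<in>{1..n} - S. y i = x i) then 1 else 0) * \<psi> y)"

text \<open>P_U(z) = tr(U rho U^dagger (|z><z| tensor I)), z a bit string on S.\<close>
definition outcome_prob :: "nat \<Rightarrow> nat set \<Rightarrow> (nat \<Rightarrow> mat2) \<Rightarrow> qstate \<Rightarrow> bits \<Rightarrow> real" where
  "outcome_prob n S U \<psi> z =
     (\<Sum>x\<in>bitstrings {1..n}. if restrict x S = z then (cmod (apply_local n S U \<psi> x))^2 else 0)"

text \<open>Joint law of one round: U = (U_i)_{i in S} i.i.d. Haar, and, given U,
  K i.i.d. outcomes Z_1..Z_K with law P_U.\<close>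
definition round_measure ::
  "nat \<Rightarrow> nat set \<Rightarrow> nat \<Rightarrow> mat2 measure \<Rightarrow> qstate \<Rightarrow> ((nat \<Rightarrow> mat2) \<times> (nat \<Rightarrow> bits)) measure" where
  "round_measure n S K \<mu> \<psi> =
     density (PiM S (\<lambda>_. \<mu>) \<Otimes>\<^sub>M count_space (PiE {1..K} (\<lambda>_. bitstrings S)))
       (\<lambda>(U, Z). ennreal (\<Prod>k\<in>{1..K}. outcome_prob n S U \<psi> (Z k)))"

definition exp_measure ::
  "nat \<Rightarrow> nat set \<Rightarrow> nat \<Rightarrow> nat \<Rightarrow> mat2 measure \<Rightarrow> qstate
   \<Rightarrow> (nat \<Rightarrow> (nat \<Rightarrow> mat2) \<times> (nat \<Rightarrow> bits)) measure" where
  "exp_measure n S K L \<mu> \<psi> = PiM {1..L} (\<lambda>_. round_measure n S K \<mu> \<psi>)"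

definition S_hat :: "nat \<Rightarrow> (nat \<Rightarrow> bits) \<Rightarrow> real" where
  "S_hat K Z = (1 / (real K * (real K - 1))) *
     (\<Sum>k\<in>{1..K}. \<Sum>k'\<in>{1..K} - {k}. of_bool (Z k = Z k'))"

definition C_hat :: "nat set \<Rightarrow> nat \<Rightarrow> nat \<Rightarrow> (nat \<Rightarrow> (nat \<Rightarrow> mat2) \<times> (nat \<Rightarrow> bits)) \<Rightarrow> real" where
  "C_hat S K L \<omega> = 1 - (3/2) ^ card S * (1 / real L) * (\<Sum>l\<in>{1..L}. S_hat K (snd (\<omega> l)))"

end

theory Submission
  imports Defs
begin

(* By left invariance of the Haar measure, the law of the local unitary U = (U_i)_{i in S} does not
  change if every U_i is replaced by W_(J i) U_i, where W_0 = I and W_1, W_2 rotate the X- and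
  Y-eigenbasis onto the computational basis. So E_U [sum_z P_U(z)^2] is the expectation of the
  average of sum_z P_(W_J U)(z)^2 over the 3^s choices of J. For each fixed U this average is
  already 3^(-s) sum_(alpha subseteq S) tr(rho_alpha^2): the three mutually unbiased qubit bases form
  a 2-design, i.e. averaged over them the fourth moments of the rows of W_j U_i are
  delta_ab delta_cd + delta_ad delta_cb, and expanding the product of these over the qubits of S
  yields one swap term tr(rho_alpha^2) per subset alpha of S.
  Conditionally on U, the collision statistic of K i.i.d. outcomes is an unbiased estimator of
  sum_z P_U(z)^2, hence C_hat is unbiased. Since 0 <= S_hat <= 1 and the L rounds are i.i.d.,
  Hoeffding's inequality yields the tail bound with c = 1/2. *)

lemma prod_of_bool:
  "finite A \<Longrightarrow> (\<Prod>i\<in>A. (of_bool (P i) :: 'a::comm_semiring_1)) = of_bool (\<forall>i\<in>A. P i)"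
  by (induction A rule: finite_induct) auto

lemma prod_if_pair:
  assumes "finite I" "k \<in> I" "k' \<in> I" "k \<noteq> k'"
  shows "(\<Prod>m\<in>I. if m = k \<or> m = k' then f m else (1::'a::comm_monoid_mult)) = f k * f k'"
proof -
  have "(\<Prod>m\<in>I. if m = k \<or> m = k' then f m else 1)
      = prod f (I \<inter> {m. m = k \<or> m = k'}) * prod (\<lambda>_. 1) (I \<inter> - {m. m = k \<or> m = k'})"
    by (rule prod.If_cases) (rule assms(1))
  also have "I \<inter> {m. m = k \<or> m = k'} = {k, k'}"
    using assms by auto
  finally show ?thesis
    using assms by simp
qed

lemma sum_nested4_swap:
  "(\<Sum>w\<in>W. \<Sum>a\<in>A. \<Sum>c\<in>C. \<Sum>b\<in>B. \<Sum>d\<in>D. (f w a c b d :: 'a::comm_monoid_add))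
     = (\<Sum>a\<in>A. \<Sum>c\<in>C. \<Sum>b\<in>B. \<Sum>d\<in>D. \<Sum>w\<in>W. f w a c b d)"
  by (simp only: sum.swap[of _ W])

lemma sum_pair_delta:
  assumes "finite B" "x \<in> B" "y \<in> B"
  shows "(\<Sum>b\<in>B. \<Sum>d\<in>B. of_bool (b = x \<and> d = y) * f b d) = (f x y :: 'a::semiring_1)"
proof -
  have "(\<Sum>b\<in>B. \<Sum>d\<in>B. of_bool (b = x \<and> d = y) * f b d)
      = (\<Sum>b\<in>B. if b = x then (\<Sum>d\<in>B. if d = y then f b d else 0) else 0)"
    by (auto intro!: sum.cong)
  also have "\<dots> = f x y"
    using assms by simp
  finally show ?thesis .
qed

lemma sum_offdiag_const:
  "(\<Sum>k\<in>{1..K}. \<Sum>k'\<in>{1..K} - {k}. c) = real K * (real K - 1) * (c :: real)"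
proof -
  have "(\<Sum>k'\<in>{1..K} - {k}. c) = (real K - 1) * c" if "k \<in> {1..K}" for k
  proof -
    have "K \<ge> 1"
      using that by simp
    with that show ?thesis
      by (simp add: of_nat_diff)
  qed
  then show ?thesis
    by simp
qed

lemma measurable_pair_measure_countable2:
  assumes "countable A" and "\<And>y. y \<in> A \<Longrightarrow> (\<lambda>x. f (x, y)) \<in> M \<rightarrow>\<^sub>M N"
  shows "f \<in> (M \<Otimes>\<^sub>M count_space A) \<rightarrow>\<^sub>M N"
proof -
  have "(\<lambda>(y, x). f (x, y)) \<in> (count_space A \<Otimes>\<^sub>M M) \<rightarrow>\<^sub>M N"
    by (rule measurable_pair_measure_countable1) (auto simp: assms)
  then show ?thesis
    by (subst measurable_pair_swap_iff) simp
qed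

lemma distr_PiM_componentwise:
  assumes fin: "finite I" and P: "prob_space M"
    and T: "\<And>i. i \<in> I \<Longrightarrow> T i \<in> M \<rightarrow>\<^sub>M M" and inv: "\<And>i. i \<in> I \<Longrightarrow> distr M M (T i) = M"
  shows "distr (PiM I (\<lambda>_. M)) (PiM I (\<lambda>_. M)) (\<lambda>x. \<lambda>i\<in>I. T i (x i)) = PiM I (\<lambda>_. M)"
proof -
  interpret product_prob_space "\<lambda>_. M"
    by (rule product_prob_spaceI) (rule P)
  let ?P = "PiM I (\<lambda>_. M)" and ?T = "\<lambda>x. \<lambda>i\<in>I. T i (x i)"
  have meas: "?T \<in> ?P \<rightarrow>\<^sub>M ?P"
  proof (rule measurable_restrict)
    fix i assume i: "i \<in> I"
    show "(\<lambda>x. T i (x i)) \<in> ?P \<rightarrow>\<^sub>M M"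
      by (rule measurable_compose[OF measurable_component_singleton[OF i] T[OF i]])
  qed
  show ?thesis
  proof (rule PiM_eqI[OF fin])
    fix A assume A: "\<And>i. i \<in> I \<Longrightarrow> A i \<in> sets M"
    have "?T -` PiE I A \<inter> space ?P = PiE I (\<lambda>i. T i -` A i \<inter> space M)"
      by (auto simp: space_PiM PiE_def Pi_def extensional_def)
    then have "emeasure (distr ?P ?P ?T) (PiE I A) = (\<Prod>i\<in>I. emeasure M (T i -` A i \<inter> space M))"
      using A fin by (simp add: emeasure_distr[OF meas] sets_PiM_I_finite emeasure_PiM
          measurable_sets[OF T])
    also have "\<dots> = (\<Prod>i\<in>I. emeasure M (A i))"
    proof (rule prod.cong[OF refl])
      fix i assume i: "i \<in> I"
      have "emeasure M (A i) = emeasure (distr M M (T i)) (A i)"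
        using inv[OF i] by simp
      then show "emeasure M (T i -` A i \<inter> space M) = emeasure M (A i)"
        by (simp add: emeasure_distr[OF T[OF i] A[OF i]])
    qed
    finally show "emeasure (distr ?P ?P ?T) (PiE I A) = (\<Prod>i\<in>I. emeasure M (A i))" .
  qed simp
qed

lemma integral_PiM_component:
  fixes f :: "'a \<Rightarrow> real"
  assumes "\<And>i. i \<in> I \<Longrightarrow> prob_space (M i)" "i \<in> I" "f \<in> borel_measurable (M i)"
  shows "(\<integral>\<omega>. f (\<omega> i) \<partial>PiM I M) = (\<integral>x. f x \<partial>M i)"
proof -
  have "distr (PiM I M) (M i) (\<lambda>\<omega>. \<omega> i) = M i"
    by (rule distr_PiM_component[OF assms(1,2)])
  then show ?thesis
    using integral_distr[OF measurable_component_singleton[OF assms(2), where M = M] assms(3)] by simp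
qed

lemma indep_vars_PiM_components:
  assumes P: "\<And>i. i \<in> I \<Longrightarrow> prob_space (M i)" and "I \<noteq> {}"
  shows "prob_space.indep_vars (PiM I M) M (\<lambda>i \<omega>. \<omega> i) I"
proof -
  have "prob_space (PiM I M)"
    by (rule prob_space_PiM) (rule P)
  moreover have "distr (PiM I M) (PiM I M) (\<lambda>x. \<lambda>i\<in>I. x i) = PiM I M"
    by (subst distr_cong[where g = "\<lambda>x. x"]) (auto simp: space_PiM PiE_def extensional_def)
  moreover have "PiM I M = PiM I (\<lambda>i. distr (PiM I M) (M i) (\<lambda>\<omega>. \<omega> i))"
    using P by (intro PiM_cong refl distr_PiM_component[symmetric]) auto
  ultimately show ?thesis
    using \<open>I \<noteq> {}\<close> by (subst prob_space.indep_vars_iff_distr_eq_PiM') auto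
qed

lemma PiM_Hoeffding_abs_ge:
  fixes f :: "'a \<Rightarrow> real" and a b \<epsilon> :: real
  assumes R: "prob_space R" and I: "finite I" "I \<noteq> {}"
    and f: "f \<in> borel_measurable R" and bounds: "AE x in R. f x \<in> {a..b}" and "a < b"
    and \<epsilon>: "\<epsilon> \<ge> 0"
  shows "measure (PiM I (\<lambda>_. R))
           {\<omega> \<in> space (PiM I (\<lambda>_. R)). \<bar>(\<Sum>i\<in>I. f (\<omega> i)) / card I - (\<integral>x. f x \<partial>R)\<bar> \<ge> \<epsilon>}
         \<le> 2 * exp (- 2 * real (card I) * \<epsilon>\<^sup>2 / (b - a)\<^sup>2)"
proof -
  let ?P = "PiM I (\<lambda>_. R)"
  obtain i0 where i0: "i0 \<in> I"
    using I by blast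
  have P: "prob_space ?P"
    by (rule prob_space_PiM) (rule R)
  have f_comp: "(\<lambda>\<omega>. f (\<omega> i)) \<in> borel_measurable ?P" if "i \<in> I" for i
    by (rule measurable_compose[OF measurable_component_singleton[OF that] f])
  have distr_f: "distr ?P borel (\<lambda>\<omega>. f (\<omega> i)) = distr R borel f" if "i \<in> I" for i
    using distr_distr[OF f measurable_component_singleton[OF that, where M = "\<lambda>_. R"]]
    by (simp add: comp_def distr_PiM_component[OF R that])
  have "prob_space.indep_vars ?P (\<lambda>_. borel) (\<lambda>i \<omega>. f (\<omega> i)) I"
    by (rule prob_space.indep_vars_compose2[OF P indep_vars_PiM_components[OF R I(2)]]) (rule f)
  then have iid: "iid_interval_bounded_random_variables ?P I (\<lambda>i \<omega>. f (\<omega> i)) (\<lambda>\<omega>. f (\<omega> i0)) a b"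
    unfolding iid_interval_bounded_random_variables_def iid_interval_bounded_random_variables_axioms_def
    using P I f_comp[OF i0] AE_PiM_component[OF R i0 bounds] distr_f i0 by auto
  interpret Hoeffding_ineq_iid ?P I "\<lambda>i \<omega>. f (\<omega> i)" "\<lambda>\<omega>. f (\<omega> i0)" a b
      "\<integral>\<omega>. f (\<omega> i0) \<partial>?P"
    unfolding Hoeffding_ineq_iid_def by (intro conjI iid) (rule reflexive)
  have "(\<integral>\<omega>. f (\<omega> i0) \<partial>?P) = (\<integral>x. f x \<partial>R)"
    by (rule integral_PiM_component[OF R i0 f])
  moreover have "prob {\<omega> \<in> space ?P. \<bar>(\<Sum>i\<in>I. f (\<omega> i)) / card I - (\<integral>\<omega>. f (\<omega> i0) \<partial>?P)\<bar> \<ge> \<epsilon>}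
      \<le> 2 * exp (- 2 * real (card I) * \<epsilon>\<^sup>2 / (b - a)\<^sup>2)"
    by (rule Hoeffding_ineq_abs_ge') (use \<epsilon> \<open>a < b\<close> I in auto)
  ultimately show ?thesis
    by simp
qed

lemma Hoeffding_sample_size:
  fixes n \<epsilon> \<delta> :: real
  assumes "0 < \<delta>" "\<epsilon> > 0" "n \<ge> ln (2 / \<delta>) / (2 * \<epsilon>\<^sup>2)"
  shows "2 * exp (- 2 * n * \<epsilon>\<^sup>2) \<le> \<delta>"
proof -
  have "ln (2 / \<delta>) \<le> 2 * n * \<epsilon>\<^sup>2"
    using assms by (simp add: pos_divide_le_eq mult_ac)
  then have "2 * exp (- 2 * n * \<epsilon>\<^sup>2) \<le> 2 * exp (- ln (2 / \<delta>))"
    by simp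
  also have "\<dots> = \<delta>"
    using assms by (simp add: exp_minus)
  finally show ?thesis .
qed

section \<open>A two-design of three qubit bases\<close>

definition inv_sqrt2 :: complex where
  "inv_sqrt2 = complex_of_real (1 / sqrt 2)"

lemma inv_sqrt2_sq: "inv_sqrt2 * inv_sqrt2 = 1/2"
proof -
  have "(1/sqrt 2) * (1/sqrt 2) = (1/2::real)"
    by (simp add: field_simps)
  then have "complex_of_real ((1/sqrt 2) * (1/sqrt 2)) = 1/2"
    by simp
  then show ?thesis
    unfolding inv_sqrt2_def by (simp only: of_real_mult)
qed

lemma cnj_inv_sqrt2 [simp]: "cnj inv_sqrt2 = inv_sqrt2"
  by (simp add: inv_sqrt2_def)

definition hadamard :: mat2 where
  "hadamard = vector [vector [inv_sqrt2, inv_sqrt2], vector [inv_sqrt2, - inv_sqrt2]]"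

(* Maps the eigenbasis of the Pauli Y matrix to the computational basis. *)
definition hadamard_y :: mat2 where
  "hadamard_y = vector [vector [inv_sqrt2, - \<i> * inv_sqrt2], vector [inv_sqrt2, \<i> * inv_sqrt2]]"

definition basis_change :: "nat \<Rightarrow> mat2" where
  "basis_change j = (if j = 0 then mat 1 else if j = 1 then hadamard else hadamard_y)"

lemma basis_change_in_U2: "basis_change j \<in> U2"
proof -
  have "hadamard \<in> U2"
    by (simp add: U2_def vec_eq_iff forall_2 matrix_matrix_mult_def sum_2 adjoint2_def hadamard_def
        mat_def inv_sqrt2_sq)
  moreover have "hadamard_y \<in> U2"
    by (simp add: U2_def vec_eq_iff forall_2 matrix_matrix_mult_def sum_2 adjoint2_def hadamard_y_def
        mat_def inv_sqrt2_sq algebra_simps)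
  moreover have "mat 1 \<in> U2"
    by (simp add: U2_def adjoint2_def vec_eq_iff matrix_matrix_mult_def mat_def forall_2 sum_2)
  ultimately show ?thesis
    by (simp add: basis_change_def)
qed

lemma basis_change_0_mult [simp]: "basis_change 0 ** U = U"
  by (simp add: basis_change_def matrix_mul_lid)

lemma basis_change_mult_entries:
  "(basis_change 1 ** U) $ 1 $ a = inv_sqrt2 * (U $ 1 $ a + U $ 2 $ a)"
  "(basis_change 1 ** U) $ 2 $ a = inv_sqrt2 * (U $ 1 $ a - U $ 2 $ a)"
  "(basis_change 2 ** U) $ 1 $ a = inv_sqrt2 * (U $ 1 $ a - \<i> * U $ 2 $ a)"
  "(basis_change 2 ** U) $ 2 $ a = inv_sqrt2 * (U $ 1 $ a + \<i> * U $ 2 $ a)"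
  by (simp_all add: basis_change_def hadamard_def hadamard_y_def matrix_matrix_mult_def sum_2
      algebra_simps)

lemma U2_columns_orthonormal:
  assumes "U \<in> U2"
  shows "cnj (U $ 1 $ a) * U $ 1 $ b + cnj (U $ 2 $ a) * U $ 2 $ b = of_bool (a = b)"
proof -
  have "(adjoint2 U ** U) $ a $ b = mat 1 $ a $ b"
    using assms by (simp add: U2_def)
  then show ?thesis
    by (simp add: matrix_matrix_mult_def adjoint2_def sum_2 mat_def)
qed

lemma bidx_True [simp]: "bidx True = 1"
  and bidx_False [simp]: "bidx False = 2"
  by (simp_all add: bidx_def)

lemma bidx_eq_iff [simp]: "bidx a = bidx b \<longleftrightarrow> a = b"
  by (auto simp: bidx_def)

lemma sum_bidx: "(\<Sum>z\<in>UNIV. f (bidx z)) = (\<Sum>k\<in>UNIV. (f k :: 'a::comm_monoid_add))"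
proof -
  have "(\<Sum>z\<in>UNIV. f (bidx z)) = f (bidx False) + f (bidx True)"
    by (simp add: UNIV_bool)
  also have "\<dots> = (\<Sum>k\<in>UNIV. f k)"
    by (simp add: sum_2 add.commute)
  finally show ?thesis .
qed

definition quartic_moment :: "mat2 \<Rightarrow> 2 \<Rightarrow> 2 \<Rightarrow> 2 \<Rightarrow> 2 \<Rightarrow> complex" where
  "quartic_moment V a b c d = (\<Sum>z\<in>UNIV. V $ z $ a * cnj (V $ z $ b) * V $ z $ c * cnj (V $ z $ d))"

(* The 2-design property of the Z, X and Y bases: the left-hand side collects, basis by basis,
  the products of the coordinates of x, y, u, w in that basis (the factor 1/4 is (1/sqrt 2)^4),
  the right-hand side is <y, x> <w, u> + <w, x> <y, u>. *)
lemma mub_quartic_identity: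
  fixes x1 x2 y1 y2 u1 u2 w1 w2 :: complex
  shows "x1 * y1 * u1 * w1 + x2 * y2 * u2 * w2
     + (1/4) * ((x1 + x2) * (y1 + y2) * (u1 + u2) * (w1 + w2) + (x1 - x2) * (y1 - y2) * (u1 - u2) * (w1 - w2))
     + (1/4) * ((x1 - \<i> * x2) * (y1 + \<i> * y2) * (u1 - \<i> * u2) * (w1 + \<i> * w2)
              + (x1 + \<i> * x2) * (y1 - \<i> * y2) * (u1 + \<i> * u2) * (w1 - \<i> * w2))
   = (y1 * x1 + y2 * x2) * (w1 * u1 + w2 * u2) + (w1 * x1 + w2 * x2) * (y1 * u1 + y2 * u2)"
  by (simp add: algebra_simps power2_eq_square)

lemma quartic_moment_basis_changes:
  assumes U: "U \<in> U2"
  shows "(\<Sum>j<3. quartic_moment (basis_change j ** U) a b c d)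
       = of_bool (a = b \<and> c = d) + of_bool (a = d \<and> c = b)"
proof -
  have sum3: "(\<Sum>j<3. f j) = f 0 + f 1 + f (2::nat)" for f :: "nat \<Rightarrow> complex"
    by (simp add: numeral_3_eq_3 numeral_2_eq_2)
  have scale: "(q * x) * (q * y) * (q * z) * (q * w) = (q * q) * (q * q) * (x * y * z * w)"
    for q x y z w :: complex
    by (simp add: ac_simps)
  have "(\<Sum>j<3. quartic_moment (basis_change j ** U) a b c d)
      = U$1$a * cnj (U$1$b) * U$1$c * cnj (U$1$d) + U$2$a * cnj (U$2$b) * U$2$c * cnj (U$2$d)
        + (1/4) * ((U$1$a + U$2$a) * (cnj (U$1$b) + cnj (U$2$b)) * (U$1$c + U$2$c) * (cnj (U$1$d) + cnj (U$2$d))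
                 + (U$1$a - U$2$a) * (cnj (U$1$b) - cnj (U$2$b)) * (U$1$c - U$2$c) * (cnj (U$1$d) - cnj (U$2$d)))
        + (1/4) * ((U$1$a - \<i> * U$2$a) * (cnj (U$1$b) + \<i> * cnj (U$2$b)) * (U$1$c - \<i> * U$2$c)
                     * (cnj (U$1$d) + \<i> * cnj (U$2$d))
                 + (U$1$a + \<i> * U$2$a) * (cnj (U$1$b) - \<i> * cnj (U$2$b)) * (U$1$c + \<i> * U$2$c)
                     * (cnj (U$1$d) - \<i> * cnj (U$2$d)))"
    by (simp only: quartic_moment_def sum3 sum_2 basis_change_0_mult basis_change_mult_entries
        complex_cnj_mult scale cnj_inv_sqrt2 inv_sqrt2_sq) (simp add: algebra_simps)
  also have "\<dots> = (cnj (U$1$b) * U$1$a + cnj (U$2$b) * U$2$a) * (cnj (U$1$d) * U$1$c + cnj (U$2$d) * U$2$c)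
                 + (cnj (U$1$d) * U$1$a + cnj (U$2$d) * U$2$a) * (cnj (U$1$b) * U$1$c + cnj (U$2$b) * U$2$c)"
    by (rule mub_quartic_identity)
  also have "\<dots> = of_bool (a = b \<and> c = d) + of_bool (a = d \<and> c = b)"
    unfolding U2_columns_orthonormal[OF U]
    by (cases "a = b"; cases "c = d"; cases "a = d"; cases "c = b") auto
  finally show ?thesis .
qed

lemma mem_bitstrings_iff: "x \<in> bitstrings A \<longleftrightarrow> (\<forall>i. i \<notin> A \<longrightarrow> x i = undefined)"
  by (auto simp: bitstrings_def PiE_def extensional_def)

lemma finite_bitstrings [simp]: "finite A \<Longrightarrow> finite (bitstrings A)"
  by (simp add: bitstrings_def finite_PiE)

lemma bitstrings_empty: "bitstrings {} = {\<lambda>_. undefined}"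
  by (simp add: bitstrings_def)

lemma restrict_in_bitstrings: "restrict x A \<in> bitstrings A"
  by (auto simp: mem_bitstrings_iff)

lemma merge_in_bitstrings:
  "x \<in> bitstrings A \<Longrightarrow> y \<in> bitstrings B \<Longrightarrow> merge A x y \<in> bitstrings (A \<union> B)"
  by (auto simp: mem_bitstrings_iff merge_def)

lemma merge_in_bitstrings_subset:
  "\<alpha> \<subseteq> S \<Longrightarrow> x \<in> bitstrings S \<Longrightarrow> y \<in> bitstrings S \<Longrightarrow> merge \<alpha> x y \<in> bitstrings S"
  by (auto simp: mem_bitstrings_iff merge_def)

lemma bitstrings_eq_iff:
  "x \<in> bitstrings A \<Longrightarrow> y \<in> bitstrings A \<Longrightarrow> (\<forall>i\<in>A. x i = y i) \<longleftrightarrow> x = y"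
  by (auto simp: mem_bitstrings_iff fun_eq_iff)

lemma eq_merge_iff:
  assumes "\<alpha> \<subseteq> S" "x \<in> bitstrings S" "y \<in> bitstrings S" "z \<in> bitstrings S"
  shows "z = merge \<alpha> x y \<longleftrightarrow> (\<forall>i\<in>\<alpha>. z i = x i) \<and> (\<forall>i\<in>S - \<alpha>. z i = y i)"
proof -
  have "z = merge \<alpha> x y \<longleftrightarrow> (\<forall>i\<in>S. z i = merge \<alpha> x y i)"
    using bitstrings_eq_iff[OF assms(4) merge_in_bitstrings_subset[OF assms(1-3)]] by simp
  then show ?thesis
    using assms(1) by (auto simp: merge_def)
qed

lemma merge_merge_left: "merge A (merge A x u) (merge A y v) = merge A x v"
  by (auto simp: merge_def)

lemma merge_merge_Diff: "\<alpha> \<subseteq> S \<Longrightarrow> merge \<alpha> x (merge (S - \<alpha>) u e) = merge S (merge \<alpha> x u) e"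
  by (auto simp: merge_def fun_eq_iff)

lemma restrict_merge: "x \<in> bitstrings A \<Longrightarrow> restrict (merge A x y) A = x"
  by (auto simp: mem_bitstrings_iff merge_def fun_eq_iff)

lemma sum_bitstrings_merge:
  assumes "A \<inter> B = {}" "A \<union> B = C"
  shows "(\<Sum>w\<in>bitstrings C. f w) = (\<Sum>x\<in>bitstrings A. \<Sum>y\<in>bitstrings B. f (merge A x y))"
proof -
  have "bij_betw (\<lambda>(x, y). merge A x y) (bitstrings A \<times> bitstrings B) (bitstrings C)"
  proof (rule bij_betw_byWitness[where f' = "\<lambda>w. (restrict w A, restrict w B)"])
    show "\<forall>p\<in>bitstrings A \<times> bitstrings B. (\<lambda>w. (restrict w A, restrict w B)) ((\<lambda>(x, y). merge A x y) p) = p"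
      using assms(1) by (force simp: mem_bitstrings_iff merge_def restrict_def fun_eq_iff)
    show "\<forall>w\<in>bitstrings C. (\<lambda>(x, y). merge A x y) (restrict w A, restrict w B) = w"
      using assms(2) by (auto simp: mem_bitstrings_iff merge_def restrict_def fun_eq_iff)
  qed (use assms(2) merge_in_bitstrings restrict_in_bitstrings in auto)
  then show ?thesis
    by (simp add: sum.cartesian_product case_prod_unfold sum.reindex_bij_betw[symmetric])
qed

lemma sum_bitstrings_prod:
  "finite S \<Longrightarrow> (\<Sum>z\<in>bitstrings S. \<Prod>i\<in>S. f i (z i)) = (\<Prod>i\<in>S. \<Sum>b\<in>UNIV. (f i b :: 'a::comm_semiring_1))"
  unfolding bitstrings_def by (rule prod_sum_PiE[symmetric]) auto

section \<open>Reduced states\<close>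

lemma reduced_partial_trace:
  assumes "\<alpha> \<subseteq> S" "S \<subseteq> {1..n}"
  shows "reduced n \<psi> \<alpha> x y
       = (\<Sum>u\<in>bitstrings (S - \<alpha>). reduced n \<psi> S (merge \<alpha> x u) (merge \<alpha> y u))"
  unfolding reduced_def merge_merge_Diff[OF assms(1), symmetric]
  by (rule sum_bitstrings_merge) (use assms in auto)

(* tr(rho_S^(x2) SWAP_alpha) = tr(rho_alpha^2), with SWAP_alpha exchanging the two copies of the
  qubits in alpha. *)
lemma trace_swap_reduced:
  assumes "\<alpha> \<subseteq> S" "S \<subseteq> {1..n}"
  shows "(\<Sum>a\<in>bitstrings S. \<Sum>c\<in>bitstrings S.
           reduced n \<psi> S a (merge \<alpha> c a) * reduced n \<psi> S c (merge \<alpha> a c))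
       = (\<Sum>x\<in>bitstrings \<alpha>. \<Sum>y\<in>bitstrings \<alpha>. reduced n \<psi> \<alpha> x y * reduced n \<psi> \<alpha> y x)"
proof -
  let ?r = "reduced n \<psi> S" and ?B = "bitstrings (S - \<alpha>)"
  have split: "(\<Sum>a\<in>bitstrings S. f a) = (\<Sum>x\<in>bitstrings \<alpha>. \<Sum>u\<in>?B. f (merge \<alpha> x u))" for f
    by (rule sum_bitstrings_merge) (use assms in auto)
  have "(\<Sum>a\<in>bitstrings S. \<Sum>c\<in>bitstrings S. ?r a (merge \<alpha> c a) * ?r c (merge \<alpha> a c))
      = (\<Sum>x\<in>bitstrings \<alpha>. \<Sum>u\<in>?B. \<Sum>y\<in>bitstrings \<alpha>. \<Sum>v\<in>?B.
           ?r (merge \<alpha> x u) (merge \<alpha> y u) * ?r (merge \<alpha> y v) (merge \<alpha> x v))"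
    by (simp add: split merge_merge_left)
  also have "\<dots> = (\<Sum>x\<in>bitstrings \<alpha>. \<Sum>y\<in>bitstrings \<alpha>. \<Sum>u\<in>?B. \<Sum>v\<in>?B.
           ?r (merge \<alpha> x u) (merge \<alpha> y u) * ?r (merge \<alpha> y v) (merge \<alpha> x v))"
    by (rule sum.cong[OF refl], rule sum.swap)
  also have "\<dots> = (\<Sum>x\<in>bitstrings \<alpha>. \<Sum>y\<in>bitstrings \<alpha>. reduced n \<psi> \<alpha> x y * reduced n \<psi> \<alpha> y x)"
    by (simp add: reduced_partial_trace[OF assms] sum_product)
  finally show ?thesis .
qed

lemma trace_reduced:
  assumes "pure_state n \<psi>" "\<alpha> \<subseteq> {1..n}"
  shows "(\<Sum>x\<in>bitstrings \<alpha>. reduced n \<psi> \<alpha> x x) = 1"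
proof -
  have "(\<Sum>x\<in>bitstrings \<alpha>. reduced n \<psi> \<alpha> x x)
      = (\<Sum>x\<in>bitstrings \<alpha>. \<Sum>e\<in>bitstrings ({1..n} - \<alpha>). complex_of_real ((cmod (\<psi> (merge \<alpha> x e)))\<^sup>2))"
    unfolding reduced_def by (simp only: complex_norm_square)
  also have "\<dots> = (\<Sum>w\<in>bitstrings {1..n}. complex_of_real ((cmod (\<psi> w))\<^sup>2))"
    by (rule sum_bitstrings_merge[symmetric]) (use assms in auto)
  also have "\<dots> = 1"
    using assms(1) unfolding pure_state_def of_real_sum[symmetric] by simp
  finally show ?thesis .
qed

(* For alpha = {} the convention tr(rho_{}^2) = 1 matches the formula because psi is normalised. *)
lemma purity_eq_Re_trace_sq:
  assumes "pure_state n \<psi>" "\<alpha> \<subseteq> {1..n}"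
  shows "purity n \<psi> \<alpha>
       = Re (\<Sum>x\<in>bitstrings \<alpha>. \<Sum>y\<in>bitstrings \<alpha>. reduced n \<psi> \<alpha> x y * reduced n \<psi> \<alpha> y x)"
proof (cases "\<alpha> = {}")
  case True
  then have "reduced n \<psi> \<alpha> (\<lambda>_. undefined) (\<lambda>_. undefined) = 1"
    using trace_reduced[OF assms] by (simp add: bitstrings_empty)
  with True show ?thesis
    by (simp add: purity_def bitstrings_empty)
qed (simp add: purity_def)

definition tensor_entry :: "nat set \<Rightarrow> (nat \<Rightarrow> mat2) \<Rightarrow> bits \<Rightarrow> bits \<Rightarrow> complex" where
  "tensor_entry S U z a = (\<Prod>i\<in>S. U i $ bidx (z i) $ bidx (a i))"

lemma apply_local_merge:
  assumes S: "S \<subseteq> {1..n}" and e: "e \<in> bitstrings ({1..n} - S)"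
  shows "apply_local n S U \<psi> (merge S z e) = (\<Sum>a\<in>bitstrings S. tensor_entry S U z a * \<psi> (merge S a e))"
proof -
  let ?R = "{1..n} - S"
  have "apply_local n S U \<psi> (merge S z e) = (\<Sum>a\<in>bitstrings S. \<Sum>e'\<in>bitstrings ?R.
      (\<Prod>i\<in>S. U i $ bidx (merge S z e i) $ bidx (merge S a e' i)) *
        (if (\<forall>i\<in>?R. merge S a e' i = merge S z e i) then 1 else 0) * \<psi> (merge S a e'))"
    unfolding apply_local_def by (rule sum_bitstrings_merge) (use S in auto)
  also have "\<dots> = (\<Sum>a\<in>bitstrings S. \<Sum>e'\<in>bitstrings ?R.
      if e' = e then tensor_entry S U z a * \<psi> (merge S a e) else 0)"
  proof (intro sum.cong refl)
    fix a e' assume e': "e' \<in> bitstrings ?R"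
    have "(\<Prod>i\<in>S. U i $ bidx (merge S z e i) $ bidx (merge S a e' i)) = tensor_entry S U z a"
      unfolding tensor_entry_def by (rule prod.cong) (auto simp: merge_def)
    moreover have "(\<forall>i\<in>?R. merge S a e' i = merge S z e i) \<longleftrightarrow> e' = e"
      using bitstrings_eq_iff[OF e' e] by (auto simp: merge_def)
    ultimately show "(\<Prod>i\<in>S. U i $ bidx (merge S z e i) $ bidx (merge S a e' i)) *
        (if (\<forall>i\<in>?R. merge S a e' i = merge S z e i) then 1 else 0) * \<psi> (merge S a e') =
        (if e' = e then tensor_entry S U z a * \<psi> (merge S a e) else 0)"
      by auto
  qed
  also have "\<dots> = (\<Sum>a\<in>bitstrings S. tensor_entry S U z a * \<psi> (merge S a e))"
    using e by simp
  finally show ?thesis .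
qed

lemma outcome_prob_merge:
  assumes S: "S \<subseteq> {1..n}" and z: "z \<in> bitstrings S"
  shows "outcome_prob n S U \<psi> z
       = (\<Sum>e\<in>bitstrings ({1..n} - S). (cmod (apply_local n S U \<psi> (merge S z e)))\<^sup>2)"
proof -
  have finS: "finite S"
    using S finite_subset by blast
  have "outcome_prob n S U \<psi> z = (\<Sum>z'\<in>bitstrings S. \<Sum>e\<in>bitstrings ({1..n} - S).
      if restrict (merge S z' e) S = z then (cmod (apply_local n S U \<psi> (merge S z' e)))\<^sup>2 else 0)"
    unfolding outcome_prob_def by (rule sum_bitstrings_merge) (use S in auto)
  also have "\<dots> = (\<Sum>z'\<in>bitstrings S. if z' = z
      then (\<Sum>e\<in>bitstrings ({1..n} - S). (cmod (apply_local n S U \<psi> (merge S z' e)))\<^sup>2) else 0)"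
    by (intro sum.cong refl) (auto simp: restrict_merge)
  finally show ?thesis
    using z finS by simp
qed

lemma outcome_prob_nonneg: "outcome_prob n S U \<psi> z \<ge> 0"
  unfolding outcome_prob_def by (intro sum_nonneg) auto

lemma outcome_prob_restrict: "outcome_prob n S (restrict U S) \<psi> = outcome_prob n S U \<psi>"
proof -
  have eq: "apply_local n S (restrict U S) \<psi> = apply_local n S U \<psi>"
    unfolding apply_local_def by (intro ext sum.cong refl arg_cong2[where f = "(*)"] prod.cong) auto
  show ?thesis
    unfolding outcome_prob_def eq ..
qed

lemma outcome_prob_quadratic_form:
  assumes S: "S \<subseteq> {1..n}" and z: "z \<in> bitstrings S"
  shows "complex_of_real (outcome_prob n S U \<psi> z) = (\<Sum>a\<in>bitstrings S. \<Sum>b\<in>bitstrings S.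
           tensor_entry S U z a * cnj (tensor_entry S U z b) * reduced n \<psi> S a b)"
proof -
  let ?R = "{1..n} - S" and ?t = "tensor_entry S U z"
  have "complex_of_real (outcome_prob n S U \<psi> z) = (\<Sum>e\<in>bitstrings ?R. \<Sum>a\<in>bitstrings S.
      \<Sum>b\<in>bitstrings S. (?t a * \<psi> (merge S a e)) * cnj (?t b * \<psi> (merge S b e)))"
    unfolding outcome_prob_merge[OF S z] of_real_sum
    by (intro sum.cong refl) (simp only: complex_norm_square apply_local_merge[OF S] cnj_sum sum_product)
  also have "\<dots> = (\<Sum>a\<in>bitstrings S. \<Sum>b\<in>bitstrings S. \<Sum>e\<in>bitstrings ?R.
      (?t a * \<psi> (merge S a e)) * cnj (?t b * \<psi> (merge S b e)))"
    by (subst sum.swap, rule sum.cong[OF refl], rule sum.swap)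
  also have "\<dots> = (\<Sum>a\<in>bitstrings S. \<Sum>b\<in>bitstrings S. ?t a * cnj (?t b) * reduced n \<psi> S a b)"
    unfolding reduced_def by (simp add: sum_distrib_left mult_ac)
  finally show ?thesis .
qed

lemma tensor_entry_columns_orthonormal:
  assumes "finite S" and U: "\<forall>i\<in>S. U i \<in> U2" and ab: "a \<in> bitstrings S" "b \<in> bitstrings S"
  shows "(\<Sum>z\<in>bitstrings S. tensor_entry S U z a * cnj (tensor_entry S U z b)) = of_bool (a = b)"
proof -
  let ?h = "\<lambda>i k. U i $ k $ bidx (a i) * cnj (U i $ k $ bidx (b i))"
  have "(\<Sum>z\<in>bitstrings S. tensor_entry S U z a * cnj (tensor_entry S U z b))
      = (\<Sum>z\<in>bitstrings S. \<Prod>i\<in>S. ?h i (bidx (z i)))"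
    unfolding tensor_entry_def by (simp add: prod.distrib)
  also have "\<dots> = (\<Prod>i\<in>S. \<Sum>z\<in>UNIV. ?h i (bidx z))"
    by (rule sum_bitstrings_prod[OF assms(1)])
  also have "\<dots> = (\<Prod>i\<in>S. \<Sum>k\<in>UNIV. ?h i k)"
    by (intro prod.cong refl sum_bidx)
  also have "\<dots> = (\<Prod>i\<in>S. of_bool (b i = a i))"
  proof (rule prod.cong[OF refl])
    fix i assume "i \<in> S"
    have "(\<Sum>k\<in>UNIV. ?h i k) = cnj (U i $ 1 $ bidx (b i)) * U i $ 1 $ bidx (a i)
                                + cnj (U i $ 2 $ bidx (b i)) * U i $ 2 $ bidx (a i)"
      by (simp add: sum_2 mult.commute)
    then show "(\<Sum>k\<in>UNIV. ?h i k) = of_bool (b i = a i)"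
      using U2_columns_orthonormal U \<open>i \<in> S\<close> by simp
  qed
  also have "\<dots> = of_bool (a = b)"
    using assms(1) bitstrings_eq_iff[OF ab] by (auto simp: prod_of_bool)
  finally show ?thesis .
qed

lemma sum_outcome_prob:
  assumes S: "S \<subseteq> {1..n}" and U: "\<forall>i\<in>S. U i \<in> U2" and pure: "pure_state n \<psi>"
  shows "(\<Sum>z\<in>bitstrings S. outcome_prob n S U \<psi> z) = 1"
proof -
  have finS: "finite S"
    using S finite_subset by blast
  let ?B = "bitstrings S" and ?t = "tensor_entry S U"
  have "complex_of_real (\<Sum>z\<in>?B. outcome_prob n S U \<psi> z)
      = (\<Sum>z\<in>?B. \<Sum>a\<in>?B. \<Sum>b\<in>?B. ?t z a * cnj (?t z b) * reduced n \<psi> S a b)"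
    unfolding of_real_sum by (intro sum.cong refl) (simp add: outcome_prob_quadratic_form[OF S])
  also have "\<dots> = (\<Sum>a\<in>?B. \<Sum>z\<in>?B. \<Sum>b\<in>?B. ?t z a * cnj (?t z b) * reduced n \<psi> S a b)"
    by (rule sum.swap)
  also have "\<dots> = (\<Sum>a\<in>?B. \<Sum>b\<in>?B. \<Sum>z\<in>?B. ?t z a * cnj (?t z b) * reduced n \<psi> S a b)"
    by (rule sum.cong[OF refl], rule sum.swap)
  also have "\<dots> = (\<Sum>a\<in>?B. \<Sum>b\<in>?B. (\<Sum>z\<in>?B. ?t z a * cnj (?t z b)) * reduced n \<psi> S a b)"
    by (simp only: sum_distrib_right)
  also have "\<dots> = (\<Sum>a\<in>?B. \<Sum>b\<in>?B. of_bool (a = b) * reduced n \<psi> S a b)"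
    by (intro sum.cong refl) (simp add: tensor_entry_columns_orthonormal[OF finS U])
  also have "\<dots> = (\<Sum>a\<in>?B. reduced n \<psi> S a a)"
    by (intro sum.cong refl) (simp add: of_bool_def if_distrib[where f = "\<lambda>x. x * _"] finS cong: if_cong)
  also have "\<dots> = 1"
    using trace_reduced[OF pure S] .
  finally show ?thesis
    by (simp only: of_real_eq_1_iff)
qed

lemma sum_tensor_entry_quartic:
  assumes "finite S"
  shows "(\<Sum>z\<in>bitstrings S. tensor_entry S U z a * cnj (tensor_entry S U z b)
                            * tensor_entry S U z c * cnj (tensor_entry S U z d))
       = (\<Prod>i\<in>S. quartic_moment (U i) (bidx (a i)) (bidx (b i)) (bidx (c i)) (bidx (d i)))"
proof -
  let ?h = "\<lambda>i k. U i $ k $ bidx (a i) * cnj (U i $ k $ bidx (b i)) * U i $ k $ bidx (c i)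
                   * cnj (U i $ k $ bidx (d i))"
  have "(\<Sum>z\<in>bitstrings S. tensor_entry S U z a * cnj (tensor_entry S U z b)
                            * tensor_entry S U z c * cnj (tensor_entry S U z d))
      = (\<Sum>z\<in>bitstrings S. \<Prod>i\<in>S. ?h i (bidx (z i)))"
    unfolding tensor_entry_def by (simp add: prod.distrib)
  also have "\<dots> = (\<Prod>i\<in>S. \<Sum>z\<in>UNIV. ?h i (bidx z))"
    by (rule sum_bitstrings_prod[OF assms])
  also have "\<dots> = (\<Prod>i\<in>S. \<Sum>k\<in>UNIV. ?h i k)"
    by (intro prod.cong refl sum_bidx)
  finally show ?thesis
    unfolding quartic_moment_def .
qed

lemma sum_outcome_prob_sq:
  assumes S: "S \<subseteq> {1..n}"
  shows "complex_of_real (\<Sum>z\<in>bitstrings S. (outcome_prob n S U \<psi> z)\<^sup>2)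
       = (\<Sum>a\<in>bitstrings S. \<Sum>c\<in>bitstrings S. \<Sum>b\<in>bitstrings S. \<Sum>d\<in>bitstrings S.
            (\<Prod>i\<in>S. quartic_moment (U i) (bidx (a i)) (bidx (b i)) (bidx (c i)) (bidx (d i)))
            * reduced n \<psi> S a b * reduced n \<psi> S c d)"
proof -
  have finS: "finite S"
    using S finite_subset by blast
  let ?B = "bitstrings S" and ?t = "tensor_entry S U" and ?r = "reduced n \<psi> S"
  let ?X = "\<lambda>z a b. ?t z a * cnj (?t z b) * ?r a b"
  have "complex_of_real (\<Sum>z\<in>?B. (outcome_prob n S U \<psi> z)\<^sup>2)
      = (\<Sum>z\<in>?B. \<Sum>a\<in>?B. \<Sum>c\<in>?B. \<Sum>b\<in>?B. \<Sum>d\<in>?B. ?X z a b * ?X z c d)"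
    unfolding of_real_sum
    by (intro sum.cong refl) (simp add: power2_eq_square outcome_prob_quadratic_form[OF S] sum_product)
  also have "\<dots> = (\<Sum>a\<in>?B. \<Sum>c\<in>?B. \<Sum>b\<in>?B. \<Sum>d\<in>?B. \<Sum>z\<in>?B. ?X z a b * ?X z c d)"
    by (rule sum_nested4_swap)
  also have "\<dots> = (\<Sum>a\<in>?B. \<Sum>c\<in>?B. \<Sum>b\<in>?B. \<Sum>d\<in>?B.
            (\<Prod>i\<in>S. quartic_moment (U i) (bidx (a i)) (bidx (b i)) (bidx (c i)) (bidx (d i))) * ?r a b * ?r c d)"
  proof (intro sum.cong refl)
    fix a b c d
    have "(\<Sum>z\<in>?B. ?X z a b * ?X z c d) = (\<Sum>z\<in>?B. (?t z a * cnj (?t z b) * ?t z c * cnj (?t z d))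
                                                   * (?r a b * ?r c d))"
      by (intro sum.cong refl) (simp only: mult_ac)
    also have "\<dots> = (\<Sum>z\<in>?B. ?t z a * cnj (?t z b) * ?t z c * cnj (?t z d)) * (?r a b * ?r c d)"
      by (rule sum_distrib_right[symmetric])
    finally show "(\<Sum>z\<in>?B. ?X z a b * ?X z c d)
        = (\<Prod>i\<in>S. quartic_moment (U i) (bidx (a i)) (bidx (b i)) (bidx (c i)) (bidx (d i))) * ?r a b * ?r c d"
      unfolding sum_tensor_entry_quartic[OF finS] by (simp only: mult.assoc)
  qed
  finally show ?thesis .
qed

section \<open>Averaging over the local basis changes\<close>

lemma sum_basis_changes_quartic_moments:
  assumes S: "finite S" and U: "\<forall>i\<in>S. U i \<in> U2"
    and bits: "a \<in> bitstrings S" "b \<in> bitstrings S" "c \<in> bitstrings S" "d \<in> bitstrings S"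
  shows "(\<Sum>J\<in>PiE S (\<lambda>_. {..<3}). \<Prod>i\<in>S. quartic_moment (basis_change (J i) ** U i) (bidx (a i)) (bidx (b i)) (bidx (c i)) (bidx (d i)))
       = (\<Sum>\<alpha>\<in>Pow S. of_bool (b = merge \<alpha> c a \<and> d = merge \<alpha> a c))"
proof -
  have "(\<Sum>J\<in>PiE S (\<lambda>_. {..<3}). \<Prod>i\<in>S. quartic_moment (basis_change (J i) ** U i) (bidx (a i)) (bidx (b i)) (bidx (c i)) (bidx (d i)))
      = (\<Prod>i\<in>S. \<Sum>j<3. quartic_moment (basis_change j ** U i) (bidx (a i)) (bidx (b i)) (bidx (c i)) (bidx (d i)))"
    by (rule prod_sum_PiE[symmetric]) (use S in auto)
  also have "\<dots> = (\<Prod>i\<in>S. of_bool (a i = d i \<and> c i = b i) + of_bool (a i = b i \<and> c i = d i))"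
    using U by (intro prod.cong refl) (simp add: quartic_moment_basis_changes add.commute)
  also have "\<dots> = (\<Sum>\<alpha>\<in>Pow S. (\<Prod>i\<in>\<alpha>. of_bool (a i = d i \<and> c i = b i))
                              * (\<Prod>i\<in>S - \<alpha>. of_bool (a i = b i \<and> c i = d i)))"
    by (rule prod_add[OF S])
  also have "\<dots> = (\<Sum>\<alpha>\<in>Pow S. of_bool (b = merge \<alpha> c a \<and> d = merge \<alpha> a c))"
  proof (intro sum.cong refl)
    fix \<alpha> assume "\<alpha> \<in> Pow S"
    then have \<alpha>: "\<alpha> \<subseteq> S" "finite \<alpha>"
      using S finite_subset by auto
    have swap_iff: "(\<forall>i\<in>\<alpha>. a i = d i \<and> c i = b i) \<and> (\<forall>i\<in>S - \<alpha>. a i = b i \<and> c i = d i)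
        \<longleftrightarrow> b = merge \<alpha> c a \<and> d = merge \<alpha> a c"
      using bits by (auto simp: eq_merge_iff[OF \<alpha>(1)])
    have "(\<Prod>i\<in>\<alpha>. of_bool (a i = d i \<and> c i = b i)) * (\<Prod>i\<in>S - \<alpha>. of_bool (a i = b i \<and> c i = d i))
        = (of_bool ((\<forall>i\<in>\<alpha>. a i = d i \<and> c i = b i) \<and> (\<forall>i\<in>S - \<alpha>. a i = b i \<and> c i = d i)) :: complex)"
      using S \<alpha> by (simp add: prod_of_bool)
    then show "(\<Prod>i\<in>\<alpha>. of_bool (a i = d i \<and> c i = b i)) * (\<Prod>i\<in>S - \<alpha>. of_bool (a i = b i \<and> c i = d i))
        = (of_bool (b = merge \<alpha> c a \<and> d = merge \<alpha> a c) :: complex)"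
      unfolding swap_iff .
  qed
  finally show ?thesis .
qed

lemma sum_basis_changes_collision:
  assumes S: "S \<subseteq> {1..n}" and U: "\<forall>i\<in>S. U i \<in> U2" and pure: "pure_state n \<psi>"
  shows "(\<Sum>J\<in>PiE S (\<lambda>_. {..<3}). \<Sum>z\<in>bitstrings S.
            (outcome_prob n S (\<lambda>i. basis_change (J i) ** U i) \<psi> z)\<^sup>2)
       = (\<Sum>\<alpha>\<in>Pow S. purity n \<psi> \<alpha>)"
proof -
  have finS: "finite S"
    using S finite_subset by blast
  let ?B = "bitstrings S" and ?J = "PiE S (\<lambda>_. {..<3::nat})" and ?r = "reduced n \<psi> S"
  let ?Q = "\<lambda>J a b c d. \<Prod>i\<in>S. quartic_moment (basis_change (J i) ** U i) (bidx (a i)) (bidx (b i)) (bidx (c i)) (bidx (d i))"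
  let ?swap = "\<lambda>\<alpha> a b c d. of_bool (b = merge \<alpha> c a \<and> d = merge \<alpha> a c) :: complex"
  have "complex_of_real (\<Sum>J\<in>?J. \<Sum>z\<in>?B. (outcome_prob n S (\<lambda>i. basis_change (J i) ** U i) \<psi> z)\<^sup>2)
      = (\<Sum>J\<in>?J. \<Sum>a\<in>?B. \<Sum>c\<in>?B. \<Sum>b\<in>?B. \<Sum>d\<in>?B. ?Q J a b c d * ?r a b * ?r c d)"
    unfolding of_real_sum[of _ ?J] sum_outcome_prob_sq[OF S] ..
  also have "\<dots> = (\<Sum>a\<in>?B. \<Sum>c\<in>?B. \<Sum>b\<in>?B. \<Sum>d\<in>?B. \<Sum>J\<in>?J. ?Q J a b c d * ?r a b * ?r c d)"
    by (rule sum_nested4_swap)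
  also have "\<dots> = (\<Sum>a\<in>?B. \<Sum>c\<in>?B. \<Sum>b\<in>?B. \<Sum>d\<in>?B. (\<Sum>J\<in>?J. ?Q J a b c d) * (?r a b * ?r c d))"
    by (simp only: sum_distrib_right mult.assoc)
  also have "\<dots> = (\<Sum>a\<in>?B. \<Sum>c\<in>?B. \<Sum>b\<in>?B. \<Sum>d\<in>?B. \<Sum>\<alpha>\<in>Pow S. ?swap \<alpha> a b c d * (?r a b * ?r c d))"
    by (intro sum.cong refl) (simp add: sum_basis_changes_quartic_moments[OF finS U] sum_distrib_right)
  also have "\<dots> = (\<Sum>\<alpha>\<in>Pow S. \<Sum>a\<in>?B. \<Sum>c\<in>?B. \<Sum>b\<in>?B. \<Sum>d\<in>?B. ?swap \<alpha> a b c d * (?r a b * ?r c d))"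
    by (rule sum_nested4_swap[symmetric])
  also have "\<dots> = (\<Sum>\<alpha>\<in>Pow S. \<Sum>a\<in>?B. \<Sum>c\<in>?B. ?r a (merge \<alpha> c a) * ?r c (merge \<alpha> a c))"
    using finS by (intro sum.cong refl sum_pair_delta) (auto simp: merge_in_bitstrings_subset)
  also have "\<dots> = (\<Sum>\<alpha>\<in>Pow S. \<Sum>x\<in>bitstrings \<alpha>. \<Sum>y\<in>bitstrings \<alpha>. reduced n \<psi> \<alpha> x y * reduced n \<psi> \<alpha> y x)"
    by (intro sum.cong refl trace_swap_reduced) (use S in auto)
  finally have "(\<Sum>J\<in>?J. \<Sum>z\<in>?B. (outcome_prob n S (\<lambda>i. basis_change (J i) ** U i) \<psi> z)\<^sup>2)
      = Re (\<Sum>\<alpha>\<in>Pow S. \<Sum>x\<in>bitstrings \<alpha>. \<Sum>y\<in>bitstrings \<alpha>. reduced n \<psi> \<alpha> x y * reduced n \<psi> \<alpha> y x)"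
    by (metis Re_complex_of_real)
  also have "\<dots> = (\<Sum>\<alpha>\<in>Pow S. Re (\<Sum>x\<in>bitstrings \<alpha>. \<Sum>y\<in>bitstrings \<alpha>. reduced n \<psi> \<alpha> x y * reduced n \<psi> \<alpha> y x))"
    by (rule Re_sum)
  also have "\<dots> = (\<Sum>\<alpha>\<in>Pow S. purity n \<psi> \<alpha>)"
    by (intro sum.cong refl purity_eq_Re_trace_sq[OF pure, symmetric]) (use S in auto)
  finally show ?thesis .
qed

lemma sum_purity_nonneg:
  assumes "S \<subseteq> {1..n}" "pure_state n \<psi>"
  shows "(\<Sum>\<alpha>\<in>Pow S. purity n \<psi> \<alpha>) \<ge> 0"
proof -
  have "mat 1 \<in> U2"
    using basis_change_in_U2[of 0] by (simp add: basis_change_def)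
  then have "(\<Sum>J\<in>PiE S (\<lambda>_. {..<3}). \<Sum>z\<in>bitstrings S.
      (outcome_prob n S (\<lambda>i. basis_change (J i) ** mat 1) \<psi> z)\<^sup>2) = (\<Sum>\<alpha>\<in>Pow S. purity n \<psi> \<alpha>)"
    by (intro sum_basis_changes_collision assms) simp
  moreover have "(\<Sum>J\<in>PiE S (\<lambda>_. {..<3}). \<Sum>z\<in>bitstrings S.
      (outcome_prob n S (\<lambda>i. basis_change (J i) ** mat 1) \<psi> z)\<^sup>2) \<ge> 0"
    by (intro sum_nonneg) auto
  ultimately show ?thesis
    by simp
qed

lemma haar_U2D:
  assumes "haar_U2 \<mu>"
  shows haar_U2_prob_space: "prob_space \<mu>"
    and haar_U2_sets: "sets \<mu> = sets borel"
    and haar_U2_AE: "AE U in \<mu>. U \<in> U2"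
    and haar_U2_mult_measurable: "(\<lambda>U. W ** U) \<in> \<mu> \<rightarrow>\<^sub>M \<mu>"
    and haar_U2_left_invariant: "W \<in> U2 \<Longrightarrow> distr \<mu> \<mu> (\<lambda>U. W ** U) = \<mu>"
proof -
  show P: "prob_space \<mu>" and sets: "sets \<mu> = sets borel"
    using assms by (auto simp: haar_U2_def)
  have "emeasure \<mu> U2 = 1"
    using assms by (simp add: haar_U2_def)
  then show "AE U in \<mu>. U \<in> U2"
    using emeasure_notin_sets[of U2 \<mu>] by (intro prob_space.AE_prob_1[OF P]) (auto simp: measure_def)
  have "(\<lambda>U::mat2. W ** U) \<in> borel_measurable borel"
    unfolding matrix_matrix_mult_def by (intro borel_measurable_continuous_onI continuous_intros)
  then show "(\<lambda>U. W ** U) \<in> \<mu> \<rightarrow>\<^sub>M \<mu>"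
    using measurable_cong_sets[OF sets sets] by blast
  assume "W \<in> U2"
  then have "distr \<mu> borel (\<lambda>U. W ** U) = \<mu>"
    using assms by (simp add: haar_U2_def)
  moreover have "distr \<mu> \<mu> (\<lambda>U. W ** U) = distr \<mu> borel (\<lambda>U. W ** U)"
    by (rule distr_cong) (simp_all add: sets)
  ultimately show "distr \<mu> \<mu> (\<lambda>U. W ** U) = \<mu>"
    by simp
qed

lemma AE_PiM_haar_U2:
  assumes "haar_U2 \<mu>" "finite S"
  shows "AE U in PiM S (\<lambda>_. \<mu>). \<forall>i\<in>S. U i \<in> U2"
  using assms by (intro AE_finite_allI AE_PiM_component haar_U2_prob_space haar_U2_AE)

lemma prob_space_PiM_haar_U2: "haar_U2 \<mu> \<Longrightarrow> prob_space (PiM S (\<lambda>_. \<mu>))"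
  by (intro prob_space_PiM haar_U2_prob_space)

lemma measurable_outcome_prob:
  assumes "sets \<mu> = sets borel"
  shows "(\<lambda>U. outcome_prob n S U \<psi> z) \<in> borel_measurable (PiM S (\<lambda>_. \<mu>))"
proof -
  have entry: "(\<lambda>U. U i $ a $ b) \<in> borel_measurable (PiM S (\<lambda>_. \<mu>))" if "i \<in> S" for i a b
  proof -
    have "(\<lambda>x::mat2. x $ a $ b) \<in> borel_measurable borel"
      by (intro borel_measurable_continuous_onI continuous_intros)
    then have "(\<lambda>x::mat2. x $ a $ b) \<in> borel_measurable \<mu>"
      using measurable_cong_sets[OF assms refl] by blast
    then show ?thesis
      by (rule measurable_compose[OF measurable_component_singleton[OF that]])
  qed
  have "(\<lambda>U. apply_local n S U \<psi> x) \<in> borel_measurable (PiM S (\<lambda>_. \<mu>))" for x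
    unfolding apply_local_def
    by (intro borel_measurable_sum borel_measurable_times borel_measurable_prod borel_measurable_const entry)
  then show ?thesis
    unfolding outcome_prob_def by measurable
qed

lemma measurable_PiM_haar_U2_mult:
  assumes "haar_U2 \<mu>"
  shows "(\<lambda>U. \<lambda>i\<in>S. W i ** U i) \<in> PiM S (\<lambda>_. \<mu>) \<rightarrow>\<^sub>M PiM S (\<lambda>_. \<mu>)"
proof (rule measurable_restrict)
  fix i assume i: "i \<in> S"
  show "(\<lambda>U. W i ** U i) \<in> PiM S (\<lambda>_. \<mu>) \<rightarrow>\<^sub>M \<mu>"
    by (rule measurable_compose[OF measurable_component_singleton[OF i] haar_U2_mult_measurable[OF assms]])
qed

lemma nn_integral_PiM_haar_U2_invariant:
  assumes h: "haar_U2 \<mu>" and S: "finite S" and W: "\<And>i. i \<in> S \<Longrightarrow> W i \<in> U2"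
    and f: "f \<in> borel_measurable (PiM S (\<lambda>_. \<mu>))"
  shows "(\<integral>\<^sup>+U. f U \<partial>PiM S (\<lambda>_. \<mu>)) = (\<integral>\<^sup>+U. f (\<lambda>i\<in>S. W i ** U i) \<partial>PiM S (\<lambda>_. \<mu>))"
proof -
  let ?M = "PiM S (\<lambda>_. \<mu>)" and ?T = "\<lambda>U. \<lambda>i\<in>S. W i ** U i"
  have T: "?T \<in> ?M \<rightarrow>\<^sub>M ?M"
    by (rule measurable_PiM_haar_U2_mult[OF h])
  have "distr ?M ?M ?T = ?M"
    by (rule distr_PiM_componentwise[OF S haar_U2_prob_space[OF h]])
      (simp_all add: haar_U2_mult_measurable[OF h] haar_U2_left_invariant[OF h] W)
  then show ?thesis
    using nn_integral_distr[OF T, of f] f by simp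
qed

lemma nn_integral_collision_probability:
  assumes h: "haar_U2 \<mu>" and S: "S \<subseteq> {1..n}" and pure: "pure_state n \<psi>"
  shows "(\<integral>\<^sup>+U. ennreal (\<Sum>z\<in>bitstrings S. (outcome_prob n S U \<psi> z)\<^sup>2) \<partial>PiM S (\<lambda>_. \<mu>))
       = ennreal ((\<Sum>\<alpha>\<in>Pow S. purity n \<psi> \<alpha>) / 3 ^ card S)"
proof -
  have finS: "finite S"
    using S finite_subset by blast
  let ?M = "PiM S (\<lambda>_. \<mu>)" and ?J = "PiE S (\<lambda>_. {..<3::nat})"
  let ?F = "\<lambda>U. ennreal (\<Sum>z\<in>bitstrings S. (outcome_prob n S U \<psi> z)\<^sup>2)"
  let ?T = "\<lambda>J U. \<lambda>i\<in>S. basis_change (J i) ** U i"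
  define c where "c = (\<Sum>\<alpha>\<in>Pow S. purity n \<psi> \<alpha>)"
  have F: "?F \<in> borel_measurable ?M"
    using measurable_outcome_prob[OF haar_U2_sets[OF h]] by measurable
  have FT: "(\<lambda>U. ?F (?T J U)) \<in> borel_measurable ?M" for J
    by (rule measurable_compose[OF measurable_PiM_haar_U2_mult[OF h] F])
  have average: "AE U in ?M. (\<Sum>J\<in>?J. ?F (?T J U)) = ennreal c"
    using AE_PiM_haar_U2[OF h finS]
  proof (rule AE_mp, intro AE_I2 impI)
    fix U assume U: "\<forall>i\<in>S. U i \<in> U2"
    have "(\<Sum>J\<in>?J. ?F (?T J U))
        = ennreal (\<Sum>J\<in>?J. \<Sum>z\<in>bitstrings S. (outcome_prob n S (\<lambda>i. basis_change (J i) ** U i) \<psi> z)\<^sup>2)"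
      by (simp add: outcome_prob_restrict sum_ennreal sum_nonneg)
    then show "(\<Sum>J\<in>?J. ?F (?T J U)) = ennreal c"
      unfolding c_def sum_basis_changes_collision[OF S U pure] .
  qed
  have "ennreal (of_nat (card ?J)) * (\<integral>\<^sup>+U. ?F U \<partial>?M) = (\<Sum>J\<in>?J. \<integral>\<^sup>+U. ?F (?T J U) \<partial>?M)"
    using nn_integral_PiM_haar_U2_invariant[OF h finS basis_change_in_U2 F]
    by (simp add: ennreal_of_nat_eq_real_of_nat)
  also have "\<dots> = (\<integral>\<^sup>+U. (\<Sum>J\<in>?J. ?F (?T J U)) \<partial>?M)"
    by (rule nn_integral_sum[symmetric]) (rule FT)
  also have "\<dots> = ennreal c"
    using nn_integral_cong_AE[OF average] prob_space.emeasure_space_1[OF prob_space_PiM_haar_U2[OF h, of S]]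
    by simp
  finally have "ennreal (3 ^ card S) * (\<integral>\<^sup>+U. ?F U \<partial>?M) = ennreal (3 ^ card S) * ennreal (c / 3 ^ card S)"
    using finS sum_purity_nonneg[OF S pure] by (simp add: card_PiE c_def ennreal_mult[symmetric])
  then show ?thesis
    unfolding c_def ennreal_mult_cancel_left by simp
qed

section \<open>The collision estimator\<close>

lemma sum_PiE_prod_collision:
  fixes p :: "'b \<Rightarrow> real"
  assumes I: "finite I" and B: "finite B" and k: "k \<in> I" "k' \<in> I" "k \<noteq> k'"
    and p1: "(\<Sum>z\<in>B. p z) = 1"
  shows "(\<Sum>Z\<in>PiE I (\<lambda>_. B). (\<Prod>m\<in>I. p (Z m)) * of_bool (Z k = Z k')) = (\<Sum>z\<in>B. (p z)\<^sup>2)"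
proof -
  \<comment> \<open>Writing [Z k = Z k'] as a sum over z of [Z k = z] [Z k' = z] makes the summand a product over m.\<close>
  let ?h = "\<lambda>z m y. p y * (if m = k \<or> m = k' then of_bool (y = z) else 1)"
  have "(\<Prod>m\<in>I. p (Z m)) * of_bool (Z k = Z k') = (\<Sum>z\<in>B. \<Prod>m\<in>I. ?h z m (Z m))"
    if Z: "Z \<in> PiE I (\<lambda>_. B)" for Z
  proof -
    have "Z k \<in> B"
      using Z k by auto
    then have "of_bool (Z k = Z k') = (\<Sum>z\<in>B. of_bool (Z k = z) * (of_bool (Z k' = z) :: real))"
      using B by (auto simp: of_bool_def if_distrib[where f = "\<lambda>x. x * _"] cong: if_cong)
    then have "(\<Prod>m\<in>I. p (Z m)) * of_bool (Z k = Z k')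
        = (\<Sum>z\<in>B. (\<Prod>m\<in>I. p (Z m)) * (of_bool (Z k = z) * of_bool (Z k' = z)))"
      by (simp add: sum_distrib_left)
    also have "\<dots> = (\<Sum>z\<in>B. \<Prod>m\<in>I. ?h z m (Z m))"
      by (intro sum.cong refl) (simp add: prod.distrib prod_if_pair[OF I k])
    finally show ?thesis .
  qed
  then have "(\<Sum>Z\<in>PiE I (\<lambda>_. B). (\<Prod>m\<in>I. p (Z m)) * of_bool (Z k = Z k'))
      = (\<Sum>z\<in>B. \<Sum>Z\<in>PiE I (\<lambda>_. B). \<Prod>m\<in>I. ?h z m (Z m))"
    by (simp add: sum.swap[of _ "PiE I (\<lambda>_. B)" B])
  also have "\<dots> = (\<Sum>z\<in>B. \<Prod>m\<in>I. \<Sum>y\<in>B. ?h z m y)"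
    using I B by (simp add: prod_sum_PiE)
  also have "\<dots> = (\<Sum>z\<in>B. \<Prod>m\<in>I. if m = k \<or> m = k' then p z else 1)"
    using B p1
    by (intro sum.cong prod.cong refl) (auto simp: of_bool_def if_distrib[where f = "\<lambda>x. _ * x"] cong: if_cong)
  also have "\<dots> = (\<Sum>z\<in>B. (p z)\<^sup>2)"
    by (simp add: prod_if_pair[OF I k] power2_eq_square)
  finally show ?thesis .
qed

lemma sum_PiE_prod_S_hat:
  fixes p :: "bits \<Rightarrow> real"
  assumes K: "K \<ge> 2" and B: "finite B" and p1: "(\<Sum>z\<in>B. p z) = 1"
  shows "(\<Sum>Z\<in>PiE {1..K} (\<lambda>_. B). (\<Prod>m\<in>{1..K}. p (Z m)) * S_hat K Z) = (\<Sum>z\<in>B. (p z)\<^sup>2)"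
proof -
  let ?Z = "PiE {1..K} (\<lambda>_. B)" and ?P = "\<lambda>Z. \<Prod>m\<in>{1..K}. p (Z m)"
  let ?c = "1 / (real K * (real K - 1))"
  have "(\<Sum>Z\<in>?Z. ?P Z * S_hat K Z)
      = ?c * (\<Sum>Z\<in>?Z. \<Sum>k\<in>{1..K}. \<Sum>k'\<in>{1..K} - {k}. ?P Z * of_bool (Z k = Z k'))"
    unfolding S_hat_def by (simp add: sum_distrib_left mult_ac)
  also have "\<dots> = ?c * (\<Sum>k\<in>{1..K}. \<Sum>k'\<in>{1..K} - {k}. \<Sum>Z\<in>?Z. ?P Z * of_bool (Z k = Z k'))"
    by (subst sum.swap, subst sum.swap) simp
  also have "\<dots> = ?c * (\<Sum>k\<in>{1..K}. \<Sum>k'\<in>{1..K} - {k}. \<Sum>z\<in>B. (p z)\<^sup>2)"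
    using B p1 by (simp add: sum_PiE_prod_collision)
  also have "\<dots> = (\<Sum>z\<in>B. (p z)\<^sup>2)"
    using K by (simp add: sum_offdiag_const)
  finally show ?thesis .
qed

lemma S_hat_nonneg: "S_hat K Z \<ge> 0"
proof -
  have "real K * (real K - 1) \<ge> 0"
    by (cases "K = 0") auto
  then show ?thesis
    unfolding S_hat_def by (intro mult_nonneg_nonneg sum_nonneg) auto
qed

lemma S_hat_le_1:
  assumes "K \<ge> 2"
  shows "S_hat K Z \<le> 1"
proof -
  have "(\<Sum>k\<in>{1..K}. \<Sum>k'\<in>{1..K} - {k}. (of_bool (Z k = Z k') :: real))
      \<le> (\<Sum>k\<in>{1..K}. \<Sum>k'\<in>{1..K} - {k}. 1)"
    by (intro sum_mono) auto
  also have "\<dots> = real K * (real K - 1)"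
    by (simp add: sum_offdiag_const)
  finally show ?thesis
    using assms unfolding S_hat_def by (simp add: divide_le_eq_1)
qed

definition outcome_seqs :: "nat set \<Rightarrow> nat \<Rightarrow> (nat \<Rightarrow> bits) set" where
  "outcome_seqs S K = PiE {1..K} (\<lambda>_. bitstrings S)"

definition round_density :: "nat \<Rightarrow> nat set \<Rightarrow> nat \<Rightarrow> qstate \<Rightarrow> (nat \<Rightarrow> mat2) \<Rightarrow> (nat \<Rightarrow> bits) \<Rightarrow> real"
  where "round_density n S K \<psi> U Z = (\<Prod>k\<in>{1..K}. outcome_prob n S U \<psi> (Z k))"

lemma finite_outcome_seqs: "finite S \<Longrightarrow> finite (outcome_seqs S K)"
  by (simp add: outcome_seqs_def finite_PiE)

lemma round_measure_eq_density:
  "round_measure n S K \<mu> \<psi> = density (PiM S (\<lambda>_. \<mu>) \<Otimes>\<^sub>M count_space (outcome_seqs S K))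
     (\<lambda>x. ennreal (round_density n S K \<psi> (fst x) (snd x)))"
  unfolding round_measure_def outcome_seqs_def round_density_def by (simp add: case_prod_unfold)

lemma round_density_nonneg: "round_density n S K \<psi> U Z \<ge> 0"
  unfolding round_density_def by (intro prod_nonneg outcome_prob_nonneg)

lemma sum_round_density:
  assumes S: "S \<subseteq> {1..n}" and U: "\<forall>i\<in>S. U i \<in> U2" and pure: "pure_state n \<psi>"
  shows "(\<Sum>Z\<in>outcome_seqs S K. round_density n S K \<psi> U Z) = 1"
proof -
  have "finite S"
    using S finite_subset by blast
  then have "(\<Sum>Z\<in>outcome_seqs S K. round_density n S K \<psi> U Z)
      = (\<Prod>k\<in>{1..K}. \<Sum>z\<in>bitstrings S. outcome_prob n S U \<psi> z)"
    unfolding outcome_seqs_def round_density_def by (intro prod_sum_PiE[symmetric]) auto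
  then show ?thesis
    by (simp add: sum_outcome_prob[OF S U pure])
qed

lemma nn_integral_round_measure:
  assumes sets: "sets \<mu> = sets borel" and S: "finite S"
    and g: "g \<in> borel_measurable (PiM S (\<lambda>_. \<mu>) \<Otimes>\<^sub>M count_space (outcome_seqs S K))"
  shows "(\<integral>\<^sup>+x. g x \<partial>round_measure n S K \<mu> \<psi>) =
     (\<integral>\<^sup>+U. (\<Sum>Z\<in>outcome_seqs S K. ennreal (round_density n S K \<psi> U Z) * g (U, Z)) \<partial>PiM S (\<lambda>_. \<mu>))"
proof -
  interpret C: sigma_finite_measure "count_space (outcome_seqs S K)"
    by (rule sigma_finite_measure_count_space_finite[OF finite_outcome_seqs[OF S]])
  let ?d = "\<lambda>x. ennreal (round_density n S K \<psi> (fst x) (snd x))"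
  have d: "?d \<in> borel_measurable (PiM S (\<lambda>_. \<mu>) \<Otimes>\<^sub>M count_space (outcome_seqs S K))"
  proof (rule measurable_pair_measure_countable2)
    show "countable (outcome_seqs S K)"
      by (rule countable_finite[OF finite_outcome_seqs[OF S]])
    fix Z
    show "(\<lambda>U. ennreal (round_density n S K \<psi> (fst (U, Z)) (snd (U, Z)))) \<in> borel_measurable (PiM S (\<lambda>_. \<mu>))"
      unfolding round_density_def fst_conv snd_conv
      by (intro measurable_compose[OF _ measurable_ennreal] borel_measurable_prod measurable_outcome_prob[OF sets])
  qed
  have "(\<integral>\<^sup>+x. g x \<partial>round_measure n S K \<mu> \<psi>)
      = (\<integral>\<^sup>+x. ?d x * g x \<partial>(PiM S (\<lambda>_. \<mu>) \<Otimes>\<^sub>M count_space (outcome_seqs S K)))"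
    unfolding round_measure_eq_density by (rule nn_integral_density[OF d g])
  also have "\<dots> = (\<integral>\<^sup>+U. \<integral>\<^sup>+Z. ?d (U, Z) * g (U, Z) \<partial>count_space (outcome_seqs S K) \<partial>PiM S (\<lambda>_. \<mu>))"
    using C.nn_integral_fst[symmetric, of "\<lambda>x. ?d x * g x"] d g by simp
  also have "\<dots> = (\<integral>\<^sup>+U. (\<Sum>Z\<in>outcome_seqs S K. ennreal (round_density n S K \<psi> U Z) * g (U, Z)) \<partial>PiM S (\<lambda>_. \<mu>))"
    by (intro nn_integral_cong) (simp add: nn_integral_count_space_finite finite_outcome_seqs[OF S])
  finally show ?thesis .
qed

lemma prob_space_round_measure:
  assumes h: "haar_U2 \<mu>" and S: "S \<subseteq> {1..n}" and pure: "pure_state n \<psi>"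
  shows "prob_space (round_measure n S K \<mu> \<psi>)"
proof
  have finS: "finite S"
    using S finite_subset by blast
  have "emeasure (round_measure n S K \<mu> \<psi>) (space (round_measure n S K \<mu> \<psi>))
      = (\<integral>\<^sup>+x. 1 \<partial>round_measure n S K \<mu> \<psi>)"
    by simp
  also have "\<dots> = (\<integral>\<^sup>+U. (\<Sum>Z\<in>outcome_seqs S K. ennreal (round_density n S K \<psi> U Z) * 1) \<partial>PiM S (\<lambda>_. \<mu>))"
    by (rule nn_integral_round_measure[OF haar_U2_sets[OF h] finS]) simp
  also have "\<dots> = (\<integral>\<^sup>+U. 1 \<partial>PiM S (\<lambda>_. \<mu>))"
    using AE_PiM_haar_U2[OF h finS]
    by (intro nn_integral_cong_AE, eventually_elim)
      (simp add: sum_ennreal round_density_nonneg sum_round_density[OF S _ pure])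
  also have "\<dots> = 1"
    using prob_space.emeasure_space_1[OF prob_space_PiM_haar_U2[OF h, of S]] by simp
  finally show "emeasure (round_measure n S K \<mu> \<psi>) (space (round_measure n S K \<mu> \<psi>)) = 1" .
qed

lemma measurable_S_hat_round:
  "(\<lambda>x. S_hat K (snd x)) \<in> borel_measurable (round_measure n S K \<mu> \<psi>)"
  unfolding round_measure_def by (simp add: measurable_compose[OF measurable_snd])

lemma integral_round_S_hat:
  assumes h: "haar_U2 \<mu>" and S: "S \<subseteq> {1..n}" and pure: "pure_state n \<psi>" and K: "K \<ge> 2"
  shows "(\<integral>x. S_hat K (snd x) \<partial>round_measure n S K \<mu> \<psi>) = (\<Sum>\<alpha>\<in>Pow S. purity n \<psi> \<alpha>) / 3 ^ card S"
proof -
  have finS: "finite S"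
    using S finite_subset by blast
  have conditional: "AE U in PiM S (\<lambda>_. \<mu>).
      (\<Sum>Z\<in>outcome_seqs S K. ennreal (round_density n S K \<psi> U Z) * ennreal (S_hat K Z))
      = ennreal (\<Sum>z\<in>bitstrings S. (outcome_prob n S U \<psi> z)\<^sup>2)"
    using AE_PiM_haar_U2[OF h finS]
  proof eventually_elim
    case (elim U)
    have "(\<Sum>Z\<in>outcome_seqs S K. round_density n S K \<psi> U Z * S_hat K Z)
        = (\<Sum>z\<in>bitstrings S. (outcome_prob n S U \<psi> z)\<^sup>2)"
      unfolding outcome_seqs_def round_density_def
      using finS sum_outcome_prob[OF S elim pure] by (intro sum_PiE_prod_S_hat[OF K]) auto
    then show ?case
      by (simp add: round_density_nonneg S_hat_nonneg sum_ennreal ennreal_mult[symmetric])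
  qed
  have "(\<lambda>x. ennreal (S_hat K (snd x)))
      \<in> borel_measurable (PiM S (\<lambda>_. \<mu>) \<Otimes>\<^sub>M count_space (outcome_seqs S K))"
    by (rule measurable_compose[OF measurable_snd]) simp
  then have "(\<integral>\<^sup>+x. ennreal (S_hat K (snd x)) \<partial>round_measure n S K \<mu> \<psi>)
      = (\<integral>\<^sup>+U. (\<Sum>Z\<in>outcome_seqs S K. ennreal (round_density n S K \<psi> U Z) * ennreal (S_hat K Z))
          \<partial>PiM S (\<lambda>_. \<mu>))"
    by (simp add: nn_integral_round_measure[OF haar_U2_sets[OF h] finS])
  also have "\<dots> = (\<integral>\<^sup>+U. ennreal (\<Sum>z\<in>bitstrings S. (outcome_prob n S U \<psi> z)\<^sup>2) \<partial>PiM S (\<lambda>_. \<mu>))"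
    by (rule nn_integral_cong_AE[OF conditional])
  also have "\<dots> = ennreal ((\<Sum>\<alpha>\<in>Pow S. purity n \<psi> \<alpha>) / 3 ^ card S)"
    by (rule nn_integral_collision_probability[OF h S pure])
  finally show ?thesis
    using sum_purity_nonneg[OF S pure]
    by (simp add: integral_eq_nn_integral[OF measurable_S_hat_round] S_hat_nonneg)
qed

lemma C_hat_eq_mean:
  "C_hat S K L \<omega> = 1 - (3/2) ^ card S * ((\<Sum>l\<in>{1..L}. S_hat K (snd (\<omega> l))) / card {1..L})"
  by (simp add: C_hat_def)

lemma conc_ent_eq_mean_purity:
  "conc_ent n \<psi> S = 1 - (3/2) ^ card S * ((\<Sum>\<alpha>\<in>Pow S. purity n \<psi> \<alpha>) / 3 ^ card S)"
  by (simp add: conc_ent_def power_divide)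

lemma C_hat_unbiased:
  assumes h: "haar_U2 \<mu>" and S: "S \<subseteq> {1..n}" and pure: "pure_state n \<psi>"
    and K: "K \<ge> 2" and L: "L \<ge> 1"
  shows "integrable (exp_measure n S K L \<mu> \<psi>) (C_hat S K L)"
    and "(\<integral>\<omega>. C_hat S K L \<omega> \<partial>exp_measure n S K L \<mu> \<psi>) = conc_ent n \<psi> S"
proof -
  let ?R = "round_measure n S K \<mu> \<psi>" and ?E = "exp_measure n S K L \<mu> \<psi>"
  let ?X = "\<lambda>l \<omega>. S_hat K (snd (\<omega> l))"
  have R: "prob_space ?R"
    by (rule prob_space_round_measure[OF h S pure])
  then interpret E: prob_space ?E
    unfolding exp_measure_def by (rule prob_space_PiM)
  have X: "integrable ?E (?X l)" "(\<integral>\<omega>. ?X l \<omega> \<partial>?E) = (\<Sum>\<alpha>\<in>Pow S. purity n \<psi> \<alpha>) / 3 ^ card S"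
    if "l \<in> {1..L}" for l
  proof -
    have "?X l \<in> borel_measurable ?E"
      unfolding exp_measure_def
      by (rule measurable_compose[OF measurable_component_singleton[OF that] measurable_S_hat_round])
    then show "integrable ?E (?X l)"
      by (intro E.integrable_const_bound[where B = 1] AE_I2) (simp_all add: S_hat_nonneg S_hat_le_1[OF K])
    show "(\<integral>\<omega>. ?X l \<omega> \<partial>?E) = (\<Sum>\<alpha>\<in>Pow S. purity n \<psi> \<alpha>) / 3 ^ card S"
      unfolding exp_measure_def integral_PiM_component[OF R that measurable_S_hat_round]
      by (rule integral_round_S_hat[OF h S pure K])
  qed
  have mean: "integrable ?E (\<lambda>\<omega>. (\<Sum>l\<in>{1..L}. ?X l \<omega>) / card {1..L})"
    by (intro integrable_divide Bochner_Integration.integrable_sum X)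
  have "(\<integral>\<omega>. (\<Sum>l\<in>{1..L}. ?X l \<omega>) / card {1..L} \<partial>?E)
      = (\<Sum>l\<in>{1..L}. \<integral>\<omega>. ?X l \<omega> \<partial>?E) / card {1..L}"
    using X(1) by simp
  also have "\<dots> = (\<Sum>\<alpha>\<in>Pow S. purity n \<psi> \<alpha>) / 3 ^ card S"
    using L by (simp add: X(2))
  finally have integral_mean: "(\<integral>\<omega>. (\<Sum>l\<in>{1..L}. ?X l \<omega>) / card {1..L} \<partial>?E)
      = (\<Sum>\<alpha>\<in>Pow S. purity n \<psi> \<alpha>) / 3 ^ card S" .
  show "integrable ?E (C_hat S K L)"
    unfolding C_hat_eq_mean by (intro Bochner_Integration.integrable_diff integrable_mult_right mean) simp
  have "(\<integral>\<omega>. C_hat S K L \<omega> \<partial>?E)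
      = (\<integral>\<omega>. 1 \<partial>?E) - (\<integral>\<omega>. (3/2) ^ card S * ((\<Sum>l\<in>{1..L}. ?X l \<omega>) / card {1..L}) \<partial>?E)"
    unfolding C_hat_eq_mean by (intro Bochner_Integration.integral_diff integrable_mult_right mean) simp
  also have "\<dots> = conc_ent n \<psi> S"
    unfolding integral_mult_right_zero integral_mean conc_ent_eq_mean_purity by (simp add: E.prob_space)
  finally show "(\<integral>\<omega>. C_hat S K L \<omega> \<partial>?E) = conc_ent n \<psi> S" .
qed

lemma C_hat_concentration:
  assumes h: "haar_U2 \<mu>" and S: "S \<subseteq> {1..n}" and pure: "pure_state n \<psi>"
    and K: "K \<ge> 2" and L: "L \<ge> 1" and \<epsilon>: "\<epsilon> > 0" and \<delta>: "0 < \<delta>"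
    and L_ge: "real L \<ge> (1/2) * (9/4) ^ card S * ln (2 / \<delta>) / \<epsilon>\<^sup>2"
  shows "measure (exp_measure n S K L \<mu> \<psi>)
           {\<omega> \<in> space (exp_measure n S K L \<mu> \<psi>). \<bar>C_hat S K L \<omega> - conc_ent n \<psi> S\<bar> \<ge> \<epsilon>} \<le> \<delta>"
proof -
  let ?R = "round_measure n S K \<mu> \<psi>" and ?E = "exp_measure n S K L \<mu> \<psi>"
  let ?f = "\<lambda>x. S_hat K (snd x)"
  define k :: real where "k = (3/2) ^ card S"
  have k: "k > 0" "k\<^sup>2 = (9/4) ^ card S"
    by (simp_all add: k_def power2_eq_square power_mult_distrib[symmetric])
  have R: "prob_space ?R"
    by (rule prob_space_round_measure[OF h S pure])
  have mean: "(\<integral>x. ?f x \<partial>?R) = (\<Sum>\<alpha>\<in>Pow S. purity n \<psi> \<alpha>) / 3 ^ card S"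
    by (rule integral_round_S_hat[OF h S pure K])
  have "C_hat S K L \<omega> - conc_ent n \<psi> S = k * ((\<integral>x. ?f x \<partial>?R) - (\<Sum>l\<in>{1..L}. ?f (\<omega> l)) / card {1..L})"
    for \<omega>
    unfolding C_hat_eq_mean conc_ent_eq_mean_purity mean k_def[symmetric] by (simp add: algebra_simps)
  then have "\<bar>C_hat S K L \<omega> - conc_ent n \<psi> S\<bar> = k * \<bar>(\<Sum>l\<in>{1..L}. ?f (\<omega> l)) / card {1..L} - (\<integral>x. ?f x \<partial>?R)\<bar>"
    for \<omega>
    using k by (simp add: abs_mult abs_minus_commute)
  then have "measure ?E {\<omega> \<in> space ?E. \<bar>C_hat S K L \<omega> - conc_ent n \<psi> S\<bar> \<ge> \<epsilon>}
      = measure ?E {\<omega> \<in> space ?E. \<bar>(\<Sum>l\<in>{1..L}. ?f (\<omega> l)) / card {1..L} - (\<integral>x. ?f x \<partial>?R)\<bar> \<ge> \<epsilon> / k}"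
    using k by (simp add: pos_divide_le_eq mult.commute)
  also have "\<dots> \<le> 2 * exp (- 2 * real (card {1..L}) * (\<epsilon> / k)\<^sup>2 / (1 - 0)\<^sup>2)"
    unfolding exp_measure_def
    using \<epsilon> k L
    by (intro PiM_Hoeffding_abs_ge[OF R] AE_I2 measurable_S_hat_round)
      (auto simp: S_hat_nonneg S_hat_le_1[OF K])
  also have "\<dots> \<le> \<delta>"
  proof -
    have "ln (2 / \<delta>) / (2 * (\<epsilon> / k)\<^sup>2) = (1/2) * (9/4) ^ card S * ln (2 / \<delta>) / \<epsilon>\<^sup>2"
      using k \<epsilon> by (simp add: power_divide field_simps)
    then show ?thesis
      using Hoeffding_sample_size[OF \<delta>, of "\<epsilon> / k" "real L"] \<epsilon> k L_ge by simp
  qed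
  finally show ?thesis .
qed

theorem theorem1:
  shows "(\<forall>n \<psi> S K L \<mu>.
            pure_state n \<psi> \<and> S \<subseteq> {1..n} \<and> S \<noteq> {} \<and> K \<ge> 2 \<and> L \<ge> 1 \<and> haar_U2 \<mu> \<longrightarrow>
              integrable (exp_measure n S K L \<mu> \<psi>) (C_hat S K L) \<and>
              (\<integral>\<omega>. C_hat S K L \<omega> \<partial>exp_measure n S K L \<mu> \<psi>) = conc_ent n \<psi> S)
       \<and> (\<exists>c>0. \<forall>n \<psi> S K L \<mu> (\<epsilon>::real) (\<delta>::real).
            pure_state n \<psi> \<and> S \<subseteq> {1..n} \<and> S \<noteq> {} \<and> K \<ge> 2 \<and> L \<ge> 1 \<and> haar_U2 \<mu> \<and>
            \<epsilon> > 0 \<and> 0 < \<delta> \<and> \<delta> < 1 \<and>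
            real L \<ge> c * (9/4) ^ card S * ln (2 / \<delta>) / \<epsilon>^2 \<longrightarrow>
              measure (exp_measure n S K L \<mu> \<psi>)
                {\<omega> \<in> space (exp_measure n S K L \<mu> \<psi>). \<bar>C_hat S K L \<omega> - conc_ent n \<psi> S\<bar> \<ge> \<epsilon>} \<le> \<delta>)"
proof (intro conjI exI[of _ "1/2"] allI impI, goal_cases)
  case (1 n \<psi> S K L \<mu>)
  show ?case
    by (rule C_hat_unbiased(1)) (use 1 in auto)
next
  case (2 n \<psi> S K L \<mu>)
  show ?case
    by (rule C_hat_unbiased(2)) (use 2 in auto)
next
  case 3
  show ?case
    by simp
next
  case (4 n \<psi> S K L \<mu> \<epsilon> \<delta>)
  show ?case
    by (rule C_hat_concentration) (use 4 in auto)
qed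

end
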